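(* For $i\in\{1,\dots,m\}$ let $f_i:\mathbb{R}^n\to\mathbb{R}\cup\{\infty\}$ be proper, lower semicontinuous, and prox-bounded with threshold $r_i$. Let $r>\max_i\{r_i\}$ and define $F(x,\lambda):=-\sum_{i=1}^m\lambda_ie_rf_i(x)$. Suppose $P_rf_i$ is single-valued and Lipschitz continuous for all $i$. Then, for any $(\bar x,\bar\lambda)$ and $\bar v\in\partial_xF(\bar x,\bar\lambda)$, the following hold: (1) $(0,\lambda')\in D^*(\partial_xF)(\bar x,\bar\lambda\,|\,\bar v)(0)\Rightarrow \lambda'=0$; (2) for some $\rho>0$, $(x',\lambda')\in D^*(\partial_xF)(\bar x,\bar\lambda\,|\,\bar v)(v')$ with $v'\neq 0$ implies $\langle x',v'\rangle>-\rho|v'|^2$; (3) the set-valued mapping $\partial_xF(\bar x,\cdot)$ has a continuous selection $g$ near $\bar\lambda$.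
   Context: Moreau envelope $e_rf(x)=\inf_y\{f(y)+\frac r2|y-x|^2\}$ and proximal mapping $P_rf(x)=\operatorname{argmin}_y\{f(y)+\frac r2|y-x|^2\}$. $f$ is prox-bounded if $e_rf(\bar x)>-\infty$ for some $r>0$ and $\bar x$; the infimum of such $r$ is the threshold. $\partial_x$ is the subdifferential in $x$, and $\partial_xF$ is regarded as the set-valued mapping $(x,\lambda)\mapsto\partial_xF(x,\lambda)$. For a set-valued mapping $S$ and $\bar y\in S(\bar z)$, the coderivative is $D^*S(\bar z|\bar y)(w)=\{z': (z',-w)\in N_{\operatorname{gph}S}(\bar z,\bar y)\}$, with $N$ the limiting normal cone. *)

theory Defs
  imports "HOL-Analysis.Analysis"
begin

(* Extended-real-valued functions f : R^n -> R \<union> {\<infinity>} are modelled as functions into ereal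
   that never take the value -\<infinity>. *)

definition proper_fun :: "('a \<Rightarrow> ereal) \<Rightarrow> bool" where
  "proper_fun f \<longleftrightarrow> (\<forall>x. f x \<noteq> -\<infinity>) \<and> (\<exists>x. f x < \<infinity>)"

definition lsc_fun :: "('a::topological_space \<Rightarrow> ereal) \<Rightarrow> bool" where
  "lsc_fun f \<longleftrightarrow> (\<forall>x. f x \<le> Liminf (at x) f)"

definition moreau_env :: "real \<Rightarrow> ('a::real_normed_vector \<Rightarrow> ereal) \<Rightarrow> 'a \<Rightarrow> ereal" where
  "moreau_env r f x = (INF y. f y + ereal (r / 2 * (norm (y - x))\<^sup>2))"

definition prox_map :: "real \<Rightarrow> ('a::real_normed_vector \<Rightarrow> ereal) \<Rightarrow> 'a \<Rightarrow> 'a set" where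
  "prox_map r f x = {y. \<forall>z. f y + ereal (r / 2 * (norm (y - x))\<^sup>2) \<le> f z + ereal (r / 2 * (norm (z - x))\<^sup>2)}"

definition prox_bounded :: "('a::real_normed_vector \<Rightarrow> ereal) \<Rightarrow> bool" where
  "prox_bounded f \<longleftrightarrow> (\<exists>r>0. \<exists>x. moreau_env r f x > -\<infinity>)"

definition prox_threshold :: "('a::real_normed_vector \<Rightarrow> ereal) \<Rightarrow> real" where
  "prox_threshold f = Inf {r. r > 0 \<and> (\<exists>x. moreau_env r f x > -\<infinity>)}"

definition regular_subdiff :: "('a::real_inner \<Rightarrow> real) \<Rightarrow> 'a \<Rightarrow> 'a set" where
  "regular_subdiff f x = {v. \<forall>e>0. \<exists>d>0. \<forall>y. norm (y - x) < d \<longrightarrow>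
      f y \<ge> f x + inner v (y - x) - e * norm (y - x)}"

definition subdiff :: "('a::real_inner \<Rightarrow> real) \<Rightarrow> 'a \<Rightarrow> 'a set" where
  "subdiff f x = {v. \<exists>xs vs. xs \<longlonglongrightarrow> x \<and> (\<lambda>k. f (xs k)) \<longlonglongrightarrow> f x \<and> vs \<longlonglongrightarrow> v \<and>
      (\<forall>k. vs k \<in> regular_subdiff f (xs k))}"

definition regular_normal_cone :: "'a::real_inner set \<Rightarrow> 'a \<Rightarrow> 'a set" where
  "regular_normal_cone C z = {w. z \<in> C \<and> (\<forall>e>0. \<exists>d>0. \<forall>z'\<in>C. norm (z' - z) < d \<longrightarrow>
      inner w (z' - z) \<le> e * norm (z' - z))}"

definition normal_cone :: "'a::real_inner set \<Rightarrow> 'a \<Rightarrow> 'a set" where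
  "normal_cone C z = {w. z \<in> C \<and> (\<exists>zs ws. (\<forall>k. zs k \<in> C) \<and> zs \<longlonglongrightarrow> z \<and> ws \<longlonglongrightarrow> w \<and>
      (\<forall>k. ws k \<in> regular_normal_cone C (zs k)))}"

definition graph_of :: "('a \<Rightarrow> 'b set) \<Rightarrow> ('a \<times> 'b) set" where
  "graph_of S = {(z, y). y \<in> S z}"

definition coderivative ::
  "('a::real_inner \<Rightarrow> 'b::real_inner set) \<Rightarrow> 'a \<Rightarrow> 'b \<Rightarrow> 'b \<Rightarrow> 'a set" where
  "coderivative S zbar ybar w = {z'. (z', - w) \<in> normal_cone (graph_of S) (zbar, ybar)}"

definition F_env :: "real \<Rightarrow> ('m::finite \<Rightarrow> real^'n \<Rightarrow> ereal) \<Rightarrow> real^'n \<Rightarrow> real^'m \<Rightarrow> real" where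
  "F_env r f x lam = - (\<Sum>i\<in>UNIV. lam $ i * real_of_ereal (moreau_env r (f i) x))"

definition partial_x_subdiff ::
  "(real^'n \<Rightarrow> real^'m \<Rightarrow> real) \<Rightarrow> ((real^'n) \<times> (real^'m)) \<Rightarrow> (real^'n) set" where
  "partial_x_subdiff F = (\<lambda>(x, lam). subdiff (\<lambda>y. F y lam) x)"

end

theory Submission
  imports Defs
begin

text \<open>
  If \<open>P\<^sub>r f\<close> is single-valued, the envelope \<open>e\<^sub>r f\<close> lies below the quadratic
  \<open>y \<mapsto> f (P\<^sub>r f x) + r/2 |P\<^sub>r f x - y|\<^sup>2\<close>, which touches it at \<open>x\<close>; hence \<open>e\<^sub>r f\<close> has the
  upper quadratic model with slope \<open>r (x - P\<^sub>r f x)\<close>, and Lipschitz continuity of this slope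
  turns it into a two-sided quadratic bound. So \<open>e\<^sub>r f\<close> is differentiable with a Lipschitz
  gradient, and \<open>\<partial>\<^sub>xF\<close> is the single-valued map
  \<open>G (x, \<lambda>) = - \<Sum>\<^sub>i \<lambda>\<^sub>i r (x - P\<^sub>r f\<^sub>i x)\<close>, which is Lipschitz near every point with a modulus
  depending continuously on the point. Every normal \<open>(x', \<lambda>', -v')\<close> to the graph of such a map
  satisfies \<open>|(x', \<lambda>')| \<le> K |v'|\<close>, which gives (1) and (2), and \<open>\<lambda> \<mapsto> G (x, \<lambda>)\<close> is a continuous
  selection, which gives (3).
\<close>

section \<open>Quadratic models\<close>

definition quadratic_remainder_bound :: "('a::real_inner \<Rightarrow> real) \<Rightarrow> ('a \<Rightarrow> 'a) \<Rightarrow> real \<Rightarrow> bool"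
  where "quadratic_remainder_bound \<phi> g C \<longleftrightarrow>
    (\<forall>x y. \<bar>\<phi> y - \<phi> x - inner (g x) (y - x)\<bar> \<le> C * (norm (y - x))\<^sup>2)"

lemma quadratic_remainder_bound_of_upper_bound:
  fixes \<phi> :: "'a::real_inner \<Rightarrow> real"
  assumes upper: "\<And>x y. \<phi> y \<le> \<phi> x + inner (g x) (y - x) + c * (norm (y - x))\<^sup>2"
    and lip: "M-lipschitz_on UNIV g"
  shows "quadratic_remainder_bound \<phi> g (M + \<bar>c\<bar>)"
  unfolding quadratic_remainder_bound_def
proof (intro allI)
  fix x y :: 'a
  define N where "N = (norm (y - x))\<^sup>2"
  have "\<bar>inner (g y - g x) (y - x)\<bar> \<le> norm (g y - g x) * norm (y - x)"
    by (rule Cauchy_Schwarz_ineq2)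
  also have "\<dots> \<le> M * N"
    using lipschitz_onD[OF lip, of y x] unfolding N_def
    by (simp add: dist_norm power2_eq_square) (metis mult.assoc mult_right_mono norm_ge_zero)
  finally have "\<bar>inner (g y) (y - x) - inner (g x) (y - x)\<bar> \<le> M * N"
    by (simp add: inner_diff_left)
  moreover have "\<phi> y \<le> \<phi> x + inner (g x) (y - x) + c * N"
    using upper unfolding N_def .
  moreover have "\<phi> x \<le> \<phi> y - inner (g y) (y - x) + c * N"
    using upper[where x = y and y = x] unfolding N_def
    by (simp add: norm_minus_commute inner_diff_right)
  moreover have "\<bar>c * N\<bar> \<le> \<bar>c\<bar> * N"
    by (simp add: N_def abs_mult)
  ultimately show "\<bar>\<phi> y - \<phi> x - inner (g x) (y - x)\<bar> \<le> (M + \<bar>c\<bar>) * (norm (y - x))\<^sup>2"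
    unfolding N_def[symmetric] by (simp add: algebra_simps abs_le_iff)
qed

lemma quadratic_remainder_bound_lincomb:
  assumes "finite I" and "\<And>i. i \<in> I \<Longrightarrow> quadratic_remainder_bound (\<phi> i) (g i) (C i)"
  shows "quadratic_remainder_bound (\<lambda>x. \<Sum>i\<in>I. c i * \<phi> i x) (\<lambda>x. \<Sum>i\<in>I. c i *\<^sub>R g i x)
           (\<Sum>i\<in>I. \<bar>c i\<bar> * C i)"
  unfolding quadratic_remainder_bound_def
proof (intro allI)
  fix x y
  have "\<bar>(\<Sum>i\<in>I. c i * \<phi> i y) - (\<Sum>i\<in>I. c i * \<phi> i x) - inner (\<Sum>i\<in>I. c i *\<^sub>R g i x) (y - x)\<bar>
      = \<bar>\<Sum>i\<in>I. c i * (\<phi> i y - \<phi> i x - inner (g i x) (y - x))\<bar>"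
    by (simp add: inner_sum_left right_diff_distrib sum_subtractf)
  also have "\<dots> \<le> (\<Sum>i\<in>I. \<bar>c i\<bar> * (C i * (norm (y - x))\<^sup>2))"
    using assms(2) unfolding quadratic_remainder_bound_def
    by (intro order_trans[OF sum_abs] sum_mono) (simp add: abs_mult mult_left_mono)
  finally show "\<bar>(\<Sum>i\<in>I. c i * \<phi> i y) - (\<Sum>i\<in>I. c i * \<phi> i x) - inner (\<Sum>i\<in>I. c i *\<^sub>R g i x) (y - x)\<bar>
      \<le> (\<Sum>i\<in>I. \<bar>c i\<bar> * C i) * (norm (y - x))\<^sup>2"
    by (simp add: sum_distrib_right mult.assoc)
qed

section \<open>Moreau envelopes with a single-valued Lipschitz proximal map\<close>

definition moreau_grad :: "real \<Rightarrow> ('a::real_vector \<Rightarrow> 'a) \<Rightarrow> 'a \<Rightarrow> 'a"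
  where "moreau_grad r p x = r *\<^sub>R (x - p x)"

lemma moreau_env_eq_prox:
  assumes "q \<in> prox_map r f x"
  shows "moreau_env r f x = f q + ereal (r / 2 * (norm (q - x))\<^sup>2)"
  unfolding moreau_env_def
proof (rule antisym)
  show "(INF y. f y + ereal (r / 2 * (norm (y - x))\<^sup>2)) \<le> f q + ereal (r / 2 * (norm (q - x))\<^sup>2)"
    by (rule INF_lower) simp
  show "f q + ereal (r / 2 * (norm (q - x))\<^sup>2) \<le> (INF y. f y + ereal (r / 2 * (norm (y - x))\<^sup>2))"
    using assms unfolding prox_map_def by (auto intro: INF_greatest)
qed

lemma prox_value_finite:
  assumes "proper_fun f" and "q \<in> prox_map r f x"
  shows "\<bar>f q\<bar> \<noteq> \<infinity>"
proof -
  obtain z where "f z < \<infinity>"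
    using assms(1) unfolding proper_fun_def by auto
  moreover have "f q + ereal (r / 2 * (norm (q - x))\<^sup>2) \<le> f z + ereal (r / 2 * (norm (z - x))\<^sup>2)"
    using assms(2) unfolding prox_map_def by auto
  ultimately have "f q \<noteq> \<infinity>"
    by auto
  moreover have "f q \<noteq> -\<infinity>"
    using assms(1) unfolding proper_fun_def by auto
  ultimately show ?thesis
    by auto
qed

lemma moreau_env_upper_bound:
  fixes f :: "'a::real_inner \<Rightarrow> ereal"
  assumes "proper_fun f" and prox: "\<And>x. p x \<in> prox_map r f x"
  shows "real_of_ereal (moreau_env r f y) \<le> real_of_ereal (moreau_env r f x)
           + inner (moreau_grad r p x) (y - x) + r / 2 * (norm (y - x))\<^sup>2"
proof -
  have finite: "\<bar>f (p z)\<bar> \<noteq> \<infinity>" for z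
    using prox_value_finite[OF assms(1) prox] .
  have "moreau_env r f y \<le> f (p x) + ereal (r / 2 * (norm (p x - y))\<^sup>2)"
    unfolding moreau_env_def by (rule INF_lower) simp
  then have "real_of_ereal (moreau_env r f y) \<le> real_of_ereal (f (p x)) + r / 2 * (norm (p x - y))\<^sup>2"
    using finite[of x] finite[of y] moreau_env_eq_prox[OF prox, of y]
    by (cases "f (p x)"; cases "f (p y)") auto
  also have "(norm (p x - y))\<^sup>2 = (norm (p x - x))\<^sup>2 + 2 * inner (x - p x) (y - x) + (norm (y - x))\<^sup>2"
    by (simp add: power2_norm_eq_inner inner_diff_left inner_diff_right inner_commute algebra_simps)
  finally show ?thesis
    using finite[of x] moreau_env_eq_prox[OF prox, of x]
    by (cases "f (p x)") (auto simp: moreau_grad_def algebra_simps)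
qed

lemma lipschitz_on_moreau_grad:
  fixes p :: "'a::real_normed_vector \<Rightarrow> 'a"
  assumes "L-lipschitz_on UNIV p"
  shows "(\<bar>r\<bar> * (1 + L))-lipschitz_on UNIV (moreau_grad r p)"
  using lipschitz_on_cmult[OF lipschitz_on_diff[OF lipschitz_on_id assms], of r]
  by (simp add: moreau_grad_def)

lemma quadratic_remainder_bound_moreau_env:
  fixes f :: "'a::real_inner \<Rightarrow> ereal"
  assumes "proper_fun f" and "\<And>x. prox_map r f x = {p x}" and "L-lipschitz_on UNIV p"
  shows "quadratic_remainder_bound (\<lambda>x. real_of_ereal (moreau_env r f x)) (moreau_grad r p)
           (\<bar>r\<bar> * (1 + L) + \<bar>r\<bar> / 2)"
proof -
  have "quadratic_remainder_bound (\<lambda>x. real_of_ereal (moreau_env r f x)) (moreau_grad r p)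
      (\<bar>r\<bar> * (1 + L) + \<bar>r / 2\<bar>)"
    using assms by (intro quadratic_remainder_bound_of_upper_bound moreau_env_upper_bound
        lipschitz_on_moreau_grad) auto
  then show ?thesis
    by simp
qed

section \<open>Subdifferentials of functions with a quadratic model\<close>

lemma in_regular_subdiff_of_lower_bound:
  fixes \<phi> :: "'a::real_inner \<Rightarrow> real"
  assumes lower: "\<And>y. \<phi> x + inner g (y - x) - M * (norm (y - x))\<^sup>2 \<le> \<phi> y"
  shows "g \<in> regular_subdiff \<phi> x"
  unfolding regular_subdiff_def mem_Collect_eq
proof (intro allI impI)
  fix e :: real
  assume "0 < e"
  define d where "d = e / (\<bar>M\<bar> + 1)"
  have "0 < d"
    using \<open>0 < e\<close> by (simp add: d_def)
  moreover have "\<phi> x + inner g (y - x) - e * norm (y - x) \<le> \<phi> y" if "norm (y - x) < d" for y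
  proof -
    have "M * (norm (y - x))\<^sup>2 \<le> (\<bar>M\<bar> + 1) * norm (y - x) * norm (y - x)"
      using mult_right_mono[of M "\<bar>M\<bar> + 1" "(norm (y - x))\<^sup>2"] by (simp add: power2_eq_square mult.assoc)
    also have "\<dots> \<le> (\<bar>M\<bar> + 1) * d * norm (y - x)"
      using that by (intro mult_right_mono mult_left_mono) auto
    also have "\<dots> = e * norm (y - x)"
      by (simp add: d_def)
    finally show ?thesis
      using lower[of y] by linarith
  qed
  ultimately show "\<exists>d>0. \<forall>y. norm (y - x) < d \<longrightarrow> \<phi> x + inner g (y - x) - e * norm (y - x) \<le> \<phi> y"
    by blast
qed

lemma regular_subdiff_unique_of_upper_bound:
  fixes \<phi> :: "'a::real_inner \<Rightarrow> real"
  assumes upper: "\<And>y. \<phi> y \<le> \<phi> x + inner g (y - x) + M * (norm (y - x))\<^sup>2"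
    and v: "v \<in> regular_subdiff \<phi> x"
  shows "v = g"
proof (rule ccontr)
  assume "v \<noteq> g"
  define u where "u = v - g"
  have u: "norm u > 0"
    using \<open>v \<noteq> g\<close> by (simp add: u_def)
  then have "norm u / 2 > 0"
    by simp
  then obtain d where "d > 0" and
    d: "\<And>y. norm (y - x) < d \<Longrightarrow> \<phi> x + inner v (y - x) - norm u / 2 * norm (y - x) \<le> \<phi> y"
    using v unfolding regular_subdiff_def mem_Collect_eq by blast
  define t where "t = min (d / (2 * norm u)) (1 / (4 * (\<bar>M\<bar> + 1)))"
  have t: "t > 0"
    using \<open>d > 0\<close> u by (simp add: t_def)
  have "t * norm u \<le> d / (2 * norm u) * norm u"
    using u by (intro mult_right_mono) (auto simp: t_def)
  then have "norm ((x + t *\<^sub>R u) - x) < d"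
    using u t \<open>d > 0\<close> by simp
  from d[OF this] upper[of "x + t *\<^sub>R u"]
  have "t * inner v u - t * norm u * norm u / 2 \<le> t * inner g u + M * t * t * (norm u * norm u)"
    using t by (simp add: power2_eq_square algebra_simps)
  moreover have "inner v u - inner g u = inner u u"
    by (simp add: u_def inner_diff_left)
  moreover have "inner u u = norm u * norm u"
    by (simp add: dot_square_norm power2_eq_square)
  ultimately have "1 / 2 * (t * (norm u * norm u)) \<le> M * t * (t * (norm u * norm u))"
    by (simp add: algebra_simps)
  then have "1 / 2 \<le> M * t"
    using t u by (simp add: mult_le_cancel_right_pos)
  moreover have "M * t \<le> \<bar>M\<bar> * (1 / (4 * (\<bar>M\<bar> + 1)))"
    using t by (intro mult_mono) (auto simp: t_def)
  moreover have "\<bar>M\<bar> * (1 / (4 * (\<bar>M\<bar> + 1))) < 1 / 2"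
    by (simp add: field_simps)
  ultimately show False
    by linarith
qed

lemma regular_subdiff_eq_of_quadratic_bound:
  fixes \<phi> :: "'a::real_inner \<Rightarrow> real"
  assumes "\<And>y. \<bar>\<phi> y - \<phi> x - inner g (y - x)\<bar> \<le> M * (norm (y - x))\<^sup>2"
  shows "regular_subdiff \<phi> x = {g}"
proof -
  have "\<phi> x + inner g (y - x) - M * (norm (y - x))\<^sup>2 \<le> \<phi> y"
    and "\<phi> y \<le> \<phi> x + inner g (y - x) + M * (norm (y - x))\<^sup>2" for y
    using assms[of y] by (simp_all add: abs_le_iff)
  then show ?thesis
    using in_regular_subdiff_of_lower_bound regular_subdiff_unique_of_upper_bound by blast
qed

lemma subdiff_eq_of_regular_subdiff:
  fixes \<phi> :: "'a::real_inner \<Rightarrow> real"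
  assumes reg: "\<And>x. regular_subdiff \<phi> x = {g x}" and "isCont g x"
  shows "subdiff \<phi> x = {g x}"
proof
  have "g x \<in> subdiff \<phi> x"
    unfolding subdiff_def mem_Collect_eq
    by (rule exI[of _ "\<lambda>_. x"], rule exI[of _ "\<lambda>_. g x"]) (simp add: reg)
  then show "{g x} \<subseteq> subdiff \<phi> x"
    by simp
  show "subdiff \<phi> x \<subseteq> {g x}"
  proof
    fix v
    assume "v \<in> subdiff \<phi> x"
    then obtain xs vs where "xs \<longlonglongrightarrow> x" "vs \<longlonglongrightarrow> v" "\<forall>k. vs k \<in> regular_subdiff \<phi> (xs k)"
      unfolding subdiff_def by blast
    moreover from this have "vs = (\<lambda>k. g (xs k))"
      using reg by auto
    moreover have "(\<lambda>k. g (xs k)) \<longlonglongrightarrow> g x"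
      using isCont_tendsto_compose[OF \<open>isCont g x\<close> \<open>xs \<longlonglongrightarrow> x\<close>] .
    ultimately show "v \<in> {g x}"
      using LIMSEQ_unique by auto
  qed
qed

lemma subdiff_eq_of_quadratic_remainder_bound:
  fixes \<phi> :: "'a::real_inner \<Rightarrow> real"
  assumes "quadratic_remainder_bound \<phi> g C" and "isCont g x"
  shows "subdiff \<phi> x = {g x}"
  using assms unfolding quadratic_remainder_bound_def
  by (intro subdiff_eq_of_regular_subdiff regular_subdiff_eq_of_quadratic_bound) auto

section \<open>Normals to graphs of single-valued maps\<close>

lemma regular_normal_cone_graph_inner_bound:
  fixes G :: "'a::real_inner \<Rightarrow> 'b::real_inner"
  assumes S: "\<And>z. S z = {G z}" and "K \<ge> 0" and "\<delta> > 0"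
    and calm: "\<And>w. norm (w - z) < \<delta> \<Longrightarrow> norm (G w - G z) \<le> K * norm (w - z)"
    and normal: "(a, c) \<in> regular_normal_cone (graph_of S) (z, y)"
    and "norm d = 1"
  shows "inner a d \<le> K * norm c"
proof (rule field_le_epsilon)
  fix e :: real
  assume "0 < e"
  have graph: "(w, G w) \<in> graph_of S" for w
    using S by (simp add: graph_of_def)
  have y: "y = G z"
    using normal S unfolding regular_normal_cone_def graph_of_def by auto
  have "e / (1 + K) > 0"
    using \<open>0 < e\<close> \<open>K \<ge> 0\<close> by simp
  then obtain \<eta> where "\<eta> > 0" and \<eta>: "\<And>p. p \<in> graph_of S \<Longrightarrow> norm (p - (z, y)) < \<eta> \<Longrightarrow>
      inner (a, c) (p - (z, y)) \<le> e / (1 + K) * norm (p - (z, y))"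
    using normal unfolding regular_normal_cone_def by blast
  define t where "t = min (\<delta> / 2) (\<eta> / (2 * (1 + K)))"
  have "t > 0" and "t < \<delta>"
    using \<open>\<delta> > 0\<close> \<open>\<eta> > 0\<close> \<open>K \<ge> 0\<close> by (auto simp: t_def)
  have "t \<le> \<eta> / (2 * (1 + K))"
    by (simp add: t_def)
  then have "t * (1 + K) < \<eta>"
    using \<open>\<eta> > 0\<close> \<open>K \<ge> 0\<close> by (simp add: field_simps)
  define w where "w = z + t *\<^sub>R d"
  have "norm (w - z) = t"
    using \<open>t > 0\<close> \<open>norm d = 1\<close> by (simp add: w_def)
  then have dG: "norm (G w - G z) \<le> K * t"
    by (metis calm \<open>t < \<delta>\<close>)
  have "norm ((w, G w) - (z, y)) \<le> norm (w - z) + norm (G w - G z)"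
    using norm_Pair_le by (simp add: y)
  also have "\<dots> \<le> t * (1 + K)"
    using dG \<open>norm (w - z) = t\<close> by (simp add: algebra_simps)
  finally have close: "norm ((w, G w) - (z, y)) \<le> t * (1 + K)" .
  have "t * inner a d + inner c (G w - G z) = inner (a, c) ((w, G w) - (z, y))"
    by (simp add: w_def y inner_Pair)
  also have "\<dots> \<le> e / (1 + K) * norm ((w, G w) - (z, y))"
    using \<eta>[OF graph] close \<open>t * (1 + K) < \<eta>\<close> by simp
  also have "\<dots> \<le> e / (1 + K) * (t * (1 + K))"
    by (rule mult_left_mono[OF close]) (use \<open>e / (1 + K) > 0\<close> in simp)
  also have "\<dots> = t * e"
    using \<open>K \<ge> 0\<close> by simp
  finally have "t * inner a d + inner c (G w - G z) \<le> t * e" .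
  moreover have "- inner c (G w - G z) \<le> t * (K * norm c)"
    using Cauchy_Schwarz_ineq2[of c "G w - G z"] mult_left_mono[OF dG norm_ge_zero[of c]]
    by (simp add: algebra_simps)
  ultimately have "t * inner a d \<le> t * (K * norm c + e)"
    by (simp add: algebra_simps)
  then show "inner a d \<le> K * norm c + e"
    using \<open>t > 0\<close> by simp
qed

lemma regular_normal_cone_graph_bound:
  fixes G :: "'a::real_inner \<Rightarrow> 'b::real_inner"
  assumes "\<And>z. S z = {G z}" and "K \<ge> 0" and "\<delta> > 0"
    and "\<And>w. norm (w - z) < \<delta> \<Longrightarrow> norm (G w - G z) \<le> K * norm (w - z)"
    and "(a, c) \<in> regular_normal_cone (graph_of S) (z, y)"
  shows "norm a \<le> K * norm c"
proof (cases "a = 0")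
  case True
  then show ?thesis
    using \<open>K \<ge> 0\<close> by simp
next
  case False
  then have "norm ((1 / norm a) *\<^sub>R a) = 1" and "inner a ((1 / norm a) *\<^sub>R a) = norm a"
    by (simp_all add: dot_square_norm power2_eq_square)
  then show ?thesis
    using regular_normal_cone_graph_inner_bound[OF assms] by metis
qed

lemma normal_cone_graph_bound:
  fixes G :: "'a::real_inner \<Rightarrow> 'b::real_inner"
  assumes S: "\<And>z. S z = {G z}" and K: "\<And>z. K z \<ge> 0" and "\<delta> > 0"
    and calm: "\<And>z w. norm (w - z) < \<delta> \<Longrightarrow> norm (G w - G z) \<le> K z * norm (w - z)"
    and "isCont K z"
    and "(a, c) \<in> normal_cone (graph_of S) (z, y)"
  shows "norm a \<le> K z * norm c"
proof -
  obtain zs ws where zs: "zs \<longlonglongrightarrow> (z, y)" and ws: "ws \<longlonglongrightarrow> (a, c)"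
    and normal: "\<And>k. ws k \<in> regular_normal_cone (graph_of S) (zs k)"
    using assms(6) unfolding normal_cone_def by blast
  have "norm (fst (ws k)) \<le> K (fst (zs k)) * norm (snd (ws k))" for k
    using regular_normal_cone_graph_bound[OF S K \<open>\<delta> > 0\<close> calm] normal[of k]
    by (metis prod.collapse)
  moreover have "(\<lambda>k. norm (fst (ws k))) \<longlonglongrightarrow> norm a"
    using tendsto_norm[OF tendsto_fst[OF ws]] by simp
  moreover have "(\<lambda>k. fst (zs k)) \<longlonglongrightarrow> z"
    using tendsto_fst[OF zs] by simp
  then have "(\<lambda>k. K (fst (zs k)) * norm (snd (ws k))) \<longlonglongrightarrow> K z * norm c"
    using tendsto_mult[OF isCont_tendsto_compose[OF \<open>isCont K z\<close>] tendsto_norm[OF tendsto_snd[OF ws]]]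
    by simp
  ultimately show ?thesis
    by (auto intro: LIMSEQ_le)
qed

lemma coderivative_norm_bound:
  fixes G :: "'a::real_inner \<Rightarrow> 'b::real_inner"
  assumes "\<And>z. S z = {G z}" and "\<And>z. K z \<ge> 0" and "\<delta> > 0"
    and "\<And>z w. norm (w - z) < \<delta> \<Longrightarrow> norm (G w - G z) \<le> K z * norm (w - z)"
    and "isCont K z"
    and "z' \<in> coderivative S z y w"
  shows "norm z' \<le> K z * norm w"
  using normal_cone_graph_bound[OF assms(1-5)] assms(6) unfolding coderivative_def by fastforce

section \<open>The partial subdifferential of F\<close>

definition F_env_grad ::
  "real \<Rightarrow> ('m::finite \<Rightarrow> real^'n \<Rightarrow> real^'n) \<Rightarrow> (real^'n) \<times> (real^'m) \<Rightarrow> real^'n"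
  where "F_env_grad r P z = (\<Sum>i\<in>UNIV. (- snd z $ i) *\<^sub>R moreau_grad r (P i) (fst z))"

definition F_env_grad_modulus ::
  "real \<Rightarrow> ('m::finite \<Rightarrow> real^'n \<Rightarrow> real^'n) \<Rightarrow> ('m \<Rightarrow> real) \<Rightarrow> (real^'n) \<times> (real^'m) \<Rightarrow> real"
  where "F_env_grad_modulus r P L z =
    (\<Sum>i\<in>UNIV. (\<bar>snd z $ i\<bar> + 1) * (\<bar>r\<bar> * (1 + L i)) + norm (moreau_grad r (P i) (fst z)))"

lemma partial_x_subdiff_F_env:
  fixes f :: "'m::finite \<Rightarrow> real^'n \<Rightarrow> ereal"
  assumes proper: "\<And>i. proper_fun (f i)" and prox: "\<And>i x. prox_map r (f i) x = {P i x}"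
    and lip: "\<And>i. (L i)-lipschitz_on UNIV (P i)"
  shows "partial_x_subdiff (F_env r f) z = {F_env_grad r P z}"
proof -
  obtain x lam where z: "z = (x, lam)"
    by fastforce
  have F: "(\<lambda>y. F_env r f y lam) = (\<lambda>y. \<Sum>i\<in>UNIV. (- lam $ i) * real_of_ereal (moreau_env r (f i) y))"
    by (simp add: F_env_def fun_eq_iff sum_negf)
  have "quadratic_remainder_bound (\<lambda>y. F_env r f y lam) (\<lambda>y. F_env_grad r P (y, lam))
      (\<Sum>i\<in>UNIV. \<bar>- lam $ i\<bar> * (\<bar>r\<bar> * (1 + L i) + \<bar>r\<bar> / 2))"
    unfolding F F_env_grad_def fst_conv snd_conv
    by (intro quadratic_remainder_bound_lincomb quadratic_remainder_bound_moreau_env proper prox lip) simp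
  moreover have "isCont (\<lambda>y. F_env_grad r P (y, lam)) x"
    using lipschitz_on_continuous_on[OF lipschitz_on_moreau_grad[OF lip]]
    by (simp add: F_env_grad_def continuous_on_eq_continuous_at)
  ultimately show ?thesis
    unfolding z partial_x_subdiff_def by (simp add: subdiff_eq_of_quadratic_remainder_bound)
qed

lemma scaleR_increment_bound:
  fixes h :: "'a::real_normed_vector \<Rightarrow> 'b::real_normed_vector"
  assumes lip: "M-lipschitz_on UNIV h"
    and "\<bar>a' - a\<bar> \<le> d" and "norm (x' - x) \<le> d" and "d \<le> 1"
  shows "norm (a' *\<^sub>R h x' - a *\<^sub>R h x) \<le> ((\<bar>a\<bar> + 1) * M + norm (h x)) * d"
proof -
  have "M \<ge> 0"
    using lip by (rule lipschitz_on_nonneg)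
  have "norm (h x' - h x) \<le> M * d"
    using lipschitz_onD[OF lip, of x' x] assms(3) \<open>M \<ge> 0\<close>
    by (simp add: dist_norm) (meson mult_left_mono order_trans)
  moreover have "\<bar>a'\<bar> \<le> \<bar>a\<bar> + 1"
    using assms(2,4) by linarith
  ultimately have "\<bar>a'\<bar> * norm (h x' - h x) \<le> (\<bar>a\<bar> + 1) * (M * d)"
    by (intro mult_mono) auto
  moreover have "\<bar>a' - a\<bar> * norm (h x) \<le> d * norm (h x)"
    using assms(2) by (simp add: mult_right_mono)
  moreover have "a' *\<^sub>R h x' - a *\<^sub>R h x = a' *\<^sub>R (h x' - h x) + (a' - a) *\<^sub>R h x"
    by (simp add: algebra_simps)
  then have "norm (a' *\<^sub>R h x' - a *\<^sub>R h x) \<le> \<bar>a'\<bar> * norm (h x' - h x) + \<bar>a' - a\<bar> * norm (h x)"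
    by (metis norm_scaleR norm_triangle_ineq)
  ultimately show ?thesis
    by (simp add: algebra_simps)
qed

lemma F_env_grad_increment_bound:
  fixes P :: "'m::finite \<Rightarrow> real^'n \<Rightarrow> real^'n"
  assumes lip: "\<And>i. (L i)-lipschitz_on UNIV (P i)" and "norm (w - z) \<le> 1"
  shows "norm (F_env_grad r P w - F_env_grad r P z) \<le> F_env_grad_modulus r P L z * norm (w - z)"
proof -
  have "norm (snd w - snd z) \<le> norm (w - z)"
    using norm_snd_le[of "snd (w - z)" "fst (w - z)", unfolded prod.collapse] by simp
  then have "\<bar>(- snd w $ i) - (- snd z $ i)\<bar> \<le> norm (w - z)" for i
    using component_le_norm_cart[of "snd w - snd z" i] by (simp add: abs_minus_commute)
  moreover have "norm (fst w - fst z) \<le> norm (w - z)"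
    using norm_fst_le[of "fst (w - z)" "snd (w - z)", unfolded prod.collapse] by simp
  ultimately have "norm ((- snd w $ i) *\<^sub>R moreau_grad r (P i) (fst w) - (- snd z $ i) *\<^sub>R moreau_grad r (P i) (fst z))
      \<le> ((\<bar>snd z $ i\<bar> + 1) * (\<bar>r\<bar> * (1 + L i)) + norm (moreau_grad r (P i) (fst z))) * norm (w - z)" for i
    using scaleR_increment_bound[OF lipschitz_on_moreau_grad[OF lip]] assms(2) by fastforce
  then show ?thesis
    unfolding F_env_grad_def F_env_grad_modulus_def sum_subtractf[symmetric] sum_distrib_right
    by (intro order_trans[OF norm_sum] sum_mono)
qed

lemma coderivative_partial_x_subdiff_F_env_bound:
  fixes f :: "'m::finite \<Rightarrow> real^'n \<Rightarrow> ereal"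
  assumes proper: "\<And>i. proper_fun (f i)" and prox: "\<And>i x. prox_map r (f i) x = {P i x}"
    and lip: "\<And>i. (L i)-lipschitz_on UNIV (P i)"
  obtains K where "K \<ge> 0"
    and "\<And>z' w. z' \<in> coderivative (partial_x_subdiff (F_env r f)) z v w \<Longrightarrow> norm z' \<le> K * norm w"
proof -
  let ?K = "F_env_grad_modulus r P L"
  have K: "?K z \<ge> 0" for z
    unfolding F_env_grad_modulus_def using lipschitz_on_nonneg[OF lip]
    by (intro sum_nonneg add_nonneg_nonneg) auto
  have "continuous_on UNIV (\<lambda>z. moreau_grad r (P i) (fst z))" for i
    using continuous_on_compose2[OF lipschitz_on_continuous_on[OF lipschitz_on_moreau_grad[OF lip]]
        continuous_on_fst[OF continuous_on_id]] by simp
  then have "continuous_on UNIV ?K"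
    unfolding F_env_grad_modulus_def by (intro continuous_intros)
  then have "isCont ?K z"
    by (metis UNIV_I continuous_on_eq_continuous_at open_UNIV)
  have calm: "\<And>z0 w. norm (w - z0) < 1 \<Longrightarrow>
      norm (F_env_grad r P w - F_env_grad r P z0) \<le> ?K z0 * norm (w - z0)"
    by (intro F_env_grad_increment_bound lip) simp
  have S: "partial_x_subdiff (F_env r f) z0 = {F_env_grad r P z0}" for z0
    using proper prox lip by (rule partial_x_subdiff_F_env)
  show thesis
    using K[of z] coderivative_norm_bound[OF S K zero_less_one calm \<open>isCont ?K z\<close>] by (rule that)
qed

lemma inner_lower_bound_of_norm_bound:
  fixes x v :: "'a::real_inner"
  assumes "norm x \<le> K * norm v" and "v \<noteq> 0"
  shows "inner x v > - (K + 1) * (norm v)\<^sup>2"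
proof -
  have "- inner x v \<le> norm x * norm v"
    using Cauchy_Schwarz_ineq2[of x v] by linarith
  also have "\<dots> \<le> K * (norm v)\<^sup>2"
    using assms(1) by (simp add: power2_eq_square mult_right_mono mult.assoc[symmetric])
  finally have "- inner x v \<le> K * (norm v)\<^sup>2" .
  moreover have "(norm v)\<^sup>2 > 0"
    using assms(2) by simp
  moreover have "- (K + 1) * (norm v)\<^sup>2 = - (K * (norm v)\<^sup>2) - (norm v)\<^sup>2"
    by (simp add: algebra_simps)
  ultimately show ?thesis
    by linarith
qed

theorem mainTheorem3:
  fixes f :: "'m::finite \<Rightarrow> real^'n \<Rightarrow> ereal"
    and r :: real
    and xbar :: "real^'n" and lbar :: "real^'m" and vbar :: "real^'n"
  assumes proper: "\<forall>i. proper_fun (f i)"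
    and lsc: "\<forall>i. lsc_fun (f i)"
    and pb: "\<forall>i. prox_bounded (f i)"
    and r_gt: "r > Max (range (\<lambda>i. prox_threshold (f i)))"
    and prox_sv_lip: "\<forall>i. \<exists>p L. (\<forall>x. prox_map r (f i) x = {p x}) \<and> L-lipschitz_on UNIV p"
    and vbar: "vbar \<in> partial_x_subdiff (F_env r f) (xbar, lbar)"
  shows "(\<forall>l'. (0, l') \<in> coderivative (partial_x_subdiff (F_env r f)) (xbar, lbar) vbar 0
              \<longrightarrow> l' = 0)
       \<and> (\<exists>\<rho>>0. \<forall>x' l' v'. v' \<noteq> 0 \<and>
              (x', l') \<in> coderivative (partial_x_subdiff (F_env r f)) (xbar, lbar) vbar v'
              \<longrightarrow> inner x' v' > - \<rho> * (norm v')\<^sup>2)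
       \<and> (\<exists>U g. open U \<and> lbar \<in> U \<and> continuous_on U g \<and>
              (\<forall>l\<in>U. g l \<in> partial_x_subdiff (F_env r f) (xbar, l)))"
proof -
  from choice[OF prox_sv_lip] obtain P
    where "\<forall>i. \<exists>L. (\<forall>x. prox_map r (f i) x = {P i x}) \<and> L-lipschitz_on UNIV (P i)" ..
  from choice[OF this] obtain L
    where "\<forall>i. (\<forall>x. prox_map r (f i) x = {P i x}) \<and> (L i)-lipschitz_on UNIV (P i)" ..
  then have prox: "\<And>i x. prox_map r (f i) x = {P i x}" and lip: "\<And>i. (L i)-lipschitz_on UNIV (P i)"
    by blast+
  have proper: "\<And>i. proper_fun (f i)"
    using proper by blast
  have S: "partial_x_subdiff (F_env r f) z = {F_env_grad r P z}" for z
    using proper prox lip by (rule partial_x_subdiff_F_env)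
  obtain K where "K \<ge> 0" and K: "\<And>z' w. z' \<in> coderivative (partial_x_subdiff (F_env r f)) (xbar, lbar) vbar w
      \<Longrightarrow> norm z' \<le> K * norm w"
    by (rule coderivative_partial_x_subdiff_F_env_bound[where f = f and P = P and L = L, OF proper prox lip])
      blast
  have "l' = 0" if "(0, l') \<in> coderivative (partial_x_subdiff (F_env r f)) (xbar, lbar) vbar 0" for l'
    using K[OF that] by simp
  moreover have "inner x' v' > - (K + 1) * (norm v')\<^sup>2"
    if "v' \<noteq> 0" "(x', l') \<in> coderivative (partial_x_subdiff (F_env r f)) (xbar, lbar) vbar v'" for x' l' v'
    using order_trans[OF norm_fst_le K[OF that(2)]] that(1) by (rule inner_lower_bound_of_norm_bound)
  moreover have "continuous_on UNIV (\<lambda>l. F_env_grad r P (xbar, l))"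
    unfolding F_env_grad_def fst_conv snd_conv by (intro continuous_intros)
  ultimately show ?thesis
    using \<open>K \<ge> 0\<close> S
    by (intro conjI exI[of _ "K + 1"] exI[of _ UNIV] exI[of _ "\<lambda>l. F_env_grad r P (xbar, l)"]) auto
qed

end
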